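(* Let $n \ge 3$ be an integer and let $I$ be a degree-based topological index with coefficients $c_{12},c_{13},c_{22},c_{23},c_{33}$. Define $c'_{12} = c_{12}-4c_{22}+3c_{23}$, $c'_{13} = c_{13}-3c_{22}+2c_{23}$, $c'_{33} = c_{22}-2c_{23}+c_{33}$. If $c'_{13}>c'_{12}>-c'_{33}>0$, then the path $P_n$ on $n$ vertices is, up to isomorphism, the only tree in $\mathcal{G}_3(n,n-1)$ that minimizes $I$.
   Context: For integers $n,m$, $\mathcal{G}_3(n,m)$ denotes the set of simple connected undirected graphs (chemical graphs) with $n$ vertices, $m$ edges and maximum degree at most $3$; in particular $\mathcal{G}_3(n,n-1)$ is the set of trees of order $n$ with maximum degree at most $3$. For a graph $G$ and $1\le i\le j$, an $ij$-edge is an edge whose endpoints have degrees $i$ and $j$, and $m_{ij}$ denotes the number of $ij$-edges of $G$. A degree-based topological index $I$ is a function on chemical graphs of order $n\ge 3$ of the form $I(G)=c_{12}m_{12}+c_{13}m_{13}+c_{22}m_{22}+c_{23}m_{23}+c_{33}m_{33}$, where the $c_{ij}$ are fixed real numbers. *)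

theory Defs
  imports Complex_Main
begin

definition simple_graph :: "'a set \<Rightarrow> 'a set set \<Rightarrow> bool" where
  "simple_graph V E \<longleftrightarrow> finite V \<and>
     (\<forall>e\<in>E. \<exists>u v. e = {u, v} \<and> u \<noteq> v \<and> u \<in> V \<and> v \<in> V)"

definition adj_rel :: "'a set set \<Rightarrow> ('a \<times> 'a) set" where
  "adj_rel E = {(u, v). {u, v} \<in> E}"

definition graph_connected :: "'a set \<Rightarrow> 'a set set \<Rightarrow> bool" where
  "graph_connected V E \<longleftrightarrow> (\<forall>u\<in>V. \<forall>v\<in>V. (u, v) \<in> (adj_rel E)\<^sup>*)"

definition vdeg :: "'a set set \<Rightarrow> 'a \<Rightarrow> nat" where
  "vdeg E v = card {e \<in> E. v \<in> e}"

text \<open>The class G_3(n,m): connected simple graphs with n vertices, m edges, max degree at most 3.\<close>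
definition chem_graph :: "nat \<Rightarrow> nat \<Rightarrow> 'a set \<Rightarrow> 'a set set \<Rightarrow> bool" where
  "chem_graph n m V E \<longleftrightarrow> simple_graph V E \<and> graph_connected V E \<and>
     card V = n \<and> card E = m \<and> (\<forall>v\<in>V. vdeg E v \<le> 3)"

definition m_edges :: "'a set set \<Rightarrow> nat \<Rightarrow> nat \<Rightarrow> nat" where
  "m_edges E i j = card {e \<in> E. \<exists>u v. e = {u, v} \<and> u \<noteq> v \<and> vdeg E u = i \<and> vdeg E v = j}"

definition deg_index :: "real \<Rightarrow> real \<Rightarrow> real \<Rightarrow> real \<Rightarrow> real \<Rightarrow> 'a set set \<Rightarrow> real" where
  "deg_index c12 c13 c22 c23 c33 E =
     c12 * m_edges E 1 2 + c13 * m_edges E 1 3 + c22 * m_edges E 2 2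
     + c23 * m_edges E 2 3 + c33 * m_edges E 3 3"

definition path_V :: "nat \<Rightarrow> nat set" where
  "path_V n = {0..<n}"

definition path_E :: "nat \<Rightarrow> nat set set" where
  "path_E n = {{i, Suc i} | i. Suc i < n}"

definition graph_iso :: "'a set \<Rightarrow> 'a set set \<Rightarrow> 'b set \<Rightarrow> 'b set set \<Rightarrow> bool" where
  "graph_iso V1 E1 V2 E2 \<longleftrightarrow> (\<exists>f. bij_betw f V1 V2 \<and>
     (\<forall>u\<in>V1. \<forall>v\<in>V1. {u, v} \<in> E1 \<longleftrightarrow> {f u, f v} \<in> E2))"

end

(*
  Write n\<^sub>i for the number of vertices of degree i. Counting the ends of edges by the
  degree of their endpoint gives, for every chemical tree of order n \<ge> 3 (where no edge
  joins two leaves),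
    m12 + m13 = n1,  m12 + 2 m22 + m23 = 2 n2,  m13 + m23 + 2 m33 = 3 n3,
  and together with \<Sum> m_ij = n - 1 and n1 + n2 + n3 = n one can eliminate m12, m22, m23:
    I(G) = 2 c12 + (n - 3) c22 + c'12 n3 + (c'13 - c'12) m13 + c'33 m33.
  The vertices of degree 3 span a forest, so m33 \<le> n3 - 1 as soon as n3 > 0, and then the
  hypotheses make the last three terms positive. Hence I(G) > 2 c12 + (n - 3) c22 unless
  n3 = 0, i.e. unless G is a tree of maximum degree 2, which is a path.
*)
theory Submission
  imports Defs
begin

definition is_tree :: "'a set \<Rightarrow> 'a set set \<Rightarrow> bool" where
  "is_tree V E \<longleftrightarrow> simple_graph V E \<and> graph_connected V E \<and> card E + 1 = card V"

lemma simple_graph_edgeE: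
  assumes "simple_graph V E" "e \<in> E"
  obtains u v where "e = {u, v}" "u \<noteq> v" "u \<in> V" "v \<in> V"
  using assms by (auto simp: simple_graph_def)

lemma simple_graph_finite_vertices: "simple_graph V E \<Longrightarrow> finite V"
  by (simp add: simple_graph_def)

lemma simple_graph_edge_subset: "simple_graph V E \<Longrightarrow> e \<in> E \<Longrightarrow> e \<subseteq> V"
  by (auto elim: simple_graph_edgeE)

lemma simple_graph_finite_edges: "simple_graph V E \<Longrightarrow> finite E"
  by (meson Pow_iff finite_Pow_iff rev_finite_subset simple_graph_edge_subset
      simple_graph_finite_vertices subsetI)

lemma adj_rel_iff [simp]: "(u, v) \<in> adj_rel E \<longleftrightarrow> {u, v} \<in> E"
  by (simp add: adj_rel_def)

lemma chem_graph_is_tree: "chem_graph n (n - 1) V E \<Longrightarrow> 1 \<le> n \<Longrightarrow> is_tree V E"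
  by (simp add: chem_graph_def is_tree_def)

lemma vdeg_Diff_edge:
  assumes "finite E" "e \<in> E"
  shows "vdeg (E - {e}) x = (if x \<in> e then vdeg E x - 1 else vdeg E x)"
proof -
  have "{f \<in> E - {e}. x \<in> f} = {f \<in> E. x \<in> f} - (if x \<in> e then {e} else {})"
    by auto
  then show ?thesis
    using assms by (simp add: vdeg_def card_Diff_singleton)
qed

lemma sum_card_incident_vertices:
  assumes "simple_graph V E"
  shows "(\<Sum>e\<in>E. card {x \<in> e. P x}) = (\<Sum>v\<in>{v \<in> V. P v}. vdeg E v)"
proof -
  have fin: "finite V" "finite E"
    using assms simple_graph_finite_vertices simple_graph_finite_edges by auto
  have "(\<Sum>e\<in>E. card {x \<in> e. P x}) = (\<Sum>e\<in>E. \<Sum>v\<in>V. if v \<in> e \<and> P v then 1 else 0)"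
  proof (rule sum.cong [OF refl])
    fix e assume "e \<in> E"
    then have "{x \<in> e. P x} = {v \<in> V. v \<in> e \<and> P v}"
      using simple_graph_edge_subset [OF assms] by blast
    then show "card {x \<in> e. P x} = (\<Sum>v\<in>V. if v \<in> e \<and> P v then 1 else 0)"
      using fin by (simp add: sum.inter_filter [symmetric])
  qed
  also have "\<dots> = (\<Sum>v\<in>V. \<Sum>e\<in>E. if v \<in> e \<and> P v then 1 else 0)"
    by (rule sum.swap)
  also have "\<dots> = (\<Sum>v\<in>V. if P v then vdeg E v else 0)"
    using fin by (intro sum.cong refl) (simp add: vdeg_def sum.inter_filter [symmetric])
  also have "\<dots> = (\<Sum>v\<in>{v \<in> V. P v}. vdeg E v)"
    using fin by (simp add: sum.inter_filter)
  finally show ?thesis .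
qed

lemma handshake:
  assumes "simple_graph V E"
  shows "(\<Sum>v\<in>V. vdeg E v) = 2 * card E"
proof -
  have "card e = 2" if "e \<in> E" for e
    using assms that by (auto elim: simple_graph_edgeE)
  then show ?thesis
    using sum_card_incident_vertices [OF assms, of "\<lambda>_. True"] by simp
qed

lemma connected_vdeg_pos:
  assumes "simple_graph V E" "graph_connected V E" "v \<in> V" "2 \<le> card V"
  shows "vdeg E v \<ge> 1"
proof -
  have "finite V"
    using assms(4) card.infinite by fastforce
  then have "card (V - {v}) \<ge> 1"
    using assms(3,4) by simp
  then obtain u where u: "u \<in> V" "u \<noteq> v"
    by (metis DiffE card.empty ex_in_conv insertI1 not_one_le_zero)
  have "(v, u) \<in> (adj_rel E)\<^sup>*"
    using assms(2,3) u(1) by (simp add: graph_connected_def)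
  then obtain y where "{v, y} \<in> E"
    using u(2) by (auto elim: converse_rtranclE)
  then have "{e \<in> E. v \<in> e} \<noteq> {}" by blast
  moreover have "finite {e \<in> E. v \<in> e}"
    using simple_graph_finite_edges [OF assms(1)] by simp
  ultimately show ?thesis
    by (simp add: vdeg_def Suc_le_eq card_gt_0_iff)
qed

lemma tree_has_leaf:
  assumes "is_tree V E" "2 \<le> card V"
  obtains v where "v \<in> V" "vdeg E v = 1"
proof -
  have sg: "simple_graph V E" and conn: "graph_connected V E" and tree_card: "card E + 1 = card V"
    using assms(1) by (auto simp: is_tree_def)
  have "\<not> (\<forall>v\<in>V. 2 \<le> vdeg E v)"
  proof
    assume "\<forall>v\<in>V. 2 \<le> vdeg E v"
    then have "(\<Sum>v\<in>V. 2) \<le> (\<Sum>v\<in>V. vdeg E v)"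
      by (intro sum_mono) blast
    then show False
      using handshake [OF sg] tree_card by simp
  qed
  then show thesis
    using connected_vdeg_pos [OF sg conn _ assms(2)] that by force
qed

lemma leaf_incident_edge:
  assumes "simple_graph V E" "vdeg E v = 1"
  obtains w where "w \<in> V" "w \<noteq> v" "{e \<in> E. v \<in> e} = {{v, w}}"
proof -
  obtain e where e: "{e' \<in> E. v \<in> e'} = {e}"
    using assms(2) by (auto simp: vdeg_def card_1_singleton_iff)
  then have "e \<in> E" "v \<in> e" by auto
  then obtain w where "e = {v, w}" "w \<noteq> v" "w \<in> V"
    using assms(1) by (elim simple_graph_edgeE) auto
  then show thesis
    using e that by blast
qed

lemma tree_remove_leaf:
  assumes tree: "is_tree V E" and leaf: "{e \<in> E. v \<in> e} = {{v, w}}" and "w \<noteq> v"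
  shows "is_tree (V - {v}) (E - {{v, w}})"
proof -
  define E' where "E' = E - {{v, w}}"
  have sg: "simple_graph V E" and conn: "graph_connected V E" and tree_card: "card E + 1 = card V"
    using tree by (auto simp: is_tree_def)
  have vw: "{v, w} \<in> E"
    using leaf by blast
  have v_notin: "v \<notin> e" if "e \<in> E'" for e
    using leaf that by (auto simp: E'_def)
  have sg': "simple_graph (V - {v}) E'"
    unfolding simple_graph_def
  proof (intro conjI ballI)
    show "finite (V - {v})"
      using simple_graph_finite_vertices [OF sg] by simp
  next
    fix e assume "e \<in> E'"
    then have "e \<in> E" "v \<notin> e"
      using v_notin by (auto simp: E'_def)
    then show "\<exists>x y. e = {x, y} \<and> x \<noteq> y \<and> x \<in> V - {v} \<and> y \<in> V - {v}"
      using sg by (elim simple_graph_edgeE) auto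
  qed
  have walk: "if x = v then (u, w) \<in> (adj_rel E')\<^sup>* else (u, x) \<in> (adj_rel E')\<^sup>*"
    if "(u, x) \<in> (adj_rel E)\<^sup>*" "u \<noteq> v" for u x
    using that(1)
  proof (induction rule: rtrancl_induct)
    case base
    then show ?case using that(2) by simp
  next
    case (step y z)
    then have yz: "{y, z} \<in> E" by simp
    show ?case
    proof (cases "y = v \<or> z = v")
      case True
      then have "{y, z} \<in> {e \<in> E. v \<in> e}"
        using yz by auto
      then have "{y, z} = {v, w}"
        using leaf by simp
      then have "(y = v \<and> z = w) \<or> (y = w \<and> z = v)"
        by (simp add: doubleton_eq_iff)
      then show ?thesis
        using step.IH \<open>w \<noteq> v\<close> by auto
    next
      case False
      then have "(y, z) \<in> adj_rel E'"
        using yz \<open>w \<noteq> v\<close> by (auto simp: E'_def doubleton_eq_iff)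
      then show ?thesis
        using False step.IH by (simp add: rtrancl_into_rtrancl)
    qed
  qed
  have conn': "graph_connected (V - {v}) E'"
    unfolding graph_connected_def
  proof (intro ballI)
    fix x y assume "x \<in> V - {v}" "y \<in> V - {v}"
    then show "(x, y) \<in> (adj_rel E')\<^sup>*"
      using conn walk [of x y] by (auto simp: graph_connected_def)
  qed
  have "v \<in> V"
    using simple_graph_edge_subset [OF sg vw] by simp
  moreover have "card E' + 1 = card E"
  proof -
    have "finite E"
      using simple_graph_finite_edges [OF sg] .
    then have "card E > 0"
      using vw card_gt_0_iff by blast
    then show ?thesis
      using vw \<open>finite E\<close> by (simp add: E'_def)
  qed
  ultimately have "card E' + 1 = card (V - {v})"
    using tree_card by simp
  with sg' conn' show ?thesis
    by (simp add: is_tree_def E'_def)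
qed

lemma no_edge_in_singleton: "simple_graph V E \<Longrightarrow> {e \<in> E. e \<subseteq> {x}} = {}"
  by (auto elim: simple_graph_edgeE)

lemma induced_edges_remove_leaf:
  assumes "finite E" "{e \<in> E. v \<in> e} = {{v, w}}"
  shows "card {e \<in> E. e \<subseteq> S} \<le> card {e \<in> E - {{v, w}}. e \<subseteq> S - {v}} + of_bool (v \<in> S)"
proof (cases "v \<in> S")
  case True
  have "{e \<in> E. e \<subseteq> S} \<subseteq> insert {v, w} {e \<in> E - {{v, w}}. e \<subseteq> S - {v}}"
    using assms(2) by blast
  then have "card {e \<in> E. e \<subseteq> S} \<le> card (insert {v, w} {e \<in> E - {{v, w}}. e \<subseteq> S - {v}})"
    using assms(1) by (intro card_mono) auto
  also have "\<dots> \<le> card {e \<in> E - {{v, w}}. e \<subseteq> S - {v}} + 1"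
    using assms(1) by (simp add: card_insert_if)
  finally show ?thesis
    using True by simp
next
  case False
  then have "{e \<in> E. e \<subseteq> S} = {e \<in> E - {{v, w}}. e \<subseteq> S - {v}}"
    by blast
  then show ?thesis
    by simp
qed

lemma tree_induced_edges_less:
  assumes "is_tree V E" "S \<subseteq> V" "S \<noteq> {}"
  shows "card {e \<in> E. e \<subseteq> S} < card S"
  using assms
proof (induction "card V" arbitrary: V E S rule: less_induct)
  case less
  have sg: "simple_graph V E"
    using less.prems(1) by (simp add: is_tree_def)
  have fin: "finite V" "finite E" "finite S"
    using sg less.prems(2) simple_graph_finite_vertices simple_graph_finite_edges finite_subset
    by blast+
  show ?case
  proof (cases "\<exists>x. S = {x}")
    case True
    then show ?thesis
      using no_edge_in_singleton [OF sg] by auto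
  next
    case False
    then obtain a b where "a \<in> S" "b \<in> S" "a \<noteq> b"
      using less.prems(3) by blast
    then have "2 \<le> card S"
      using card_le_Suc0_iff_eq [OF fin(3)] by fastforce
    then have "2 \<le> card V"
      using card_mono [OF fin(1) less.prems(2)] by linarith
    then obtain v where v: "v \<in> V" "vdeg E v = 1"
      using tree_has_leaf less.prems(1) by blast
    obtain w where w: "w \<in> V" "w \<noteq> v" "{e \<in> E. v \<in> e} = {{v, w}}"
      by (rule leaf_incident_edge [OF sg v(2)])
    have "card {e \<in> E - {{v, w}}. e \<subseteq> S - {v}} < card (S - {v})"
    proof (rule less.hyps)
      show "card (V - {v}) < card V"
        using fin(1) v(1) by (rule card_Diff1_less)
      show "is_tree (V - {v}) (E - {{v, w}})"
        using less.prems(1) w(3,2) by (rule tree_remove_leaf)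
      show "S - {v} \<subseteq> V - {v}" "S - {v} \<noteq> {}"
        using less.prems(2,3) False by auto
    qed
    then show ?thesis
      using induced_edges_remove_leaf [OF fin(2) w(3), of S] fin(3) by (cases "v \<in> S") auto
  qed
qed

lemma doubleton_in_path_E:
  "{a, b} \<in> path_E n \<longleftrightarrow> (b = Suc a \<and> b < n) \<or> (a = Suc b \<and> a < n)"
  by (auto simp: path_E_def doubleton_eq_iff)

lemma singleton_notin_path_E: "{a} \<notin> path_E n"
  using doubleton_in_path_E [of a a n] by simp

lemma path_simple_graph: "simple_graph (path_V n) (path_E n)"
  unfolding simple_graph_def path_V_def path_E_def
proof (intro conjI ballI)
  fix e assume "e \<in> {{i, Suc i} |i. Suc i < n}"
  then obtain i where "e = {i, Suc i}" "Suc i < n"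
    by blast
  then show "\<exists>u v. e = {u, v} \<and> u \<noteq> v \<and> u \<in> {0..<n} \<and> v \<in> {0..<n}"
    by (intro exI [of _ i] exI [of _ "Suc i"]) simp
qed simp

lemma path_connected: "graph_connected (path_V n) (path_E n)"
proof -
  have from_0: "(0, k) \<in> (adj_rel (path_E n))\<^sup>*" if "k < n" for k
    using that
  proof (induction k)
    case (Suc k)
    then have "(k, Suc k) \<in> adj_rel (path_E n)"
      by (simp add: doubleton_in_path_E)
    with Suc show ?case
      by (simp add: rtrancl_into_rtrancl)
  qed simp
  have "sym ((adj_rel (path_E n))\<^sup>*)"
    by (intro sym_rtrancl) (auto simp: sym_def insert_commute)
  then have "(u, v) \<in> (adj_rel (path_E n))\<^sup>*" if "u < n" "v < n" for u v
    using from_0 [OF that(1)] from_0 [OF that(2)] by (blast dest: symD intro: rtrancl_trans)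
  then show ?thesis
    by (simp add: graph_connected_def path_V_def)
qed

lemma card_path_E: "card (path_E n) = n - 1"
proof -
  have "path_E n = (\<lambda>i. {i, Suc i}) ` {0..<n - 1}"
    by (auto simp: path_E_def)
  moreover have "inj_on (\<lambda>i. {i, Suc i}) {0..<n - 1}"
    by (auto simp: inj_on_def doubleton_eq_iff)
  ultimately show ?thesis
    by (simp add: card_image)
qed

lemma vdeg_path_E_le_2: "vdeg (path_E n) i \<le> 2"
proof -
  have "{e \<in> path_E n. i \<in> e} \<subseteq> {{i - 1, i}, {i, Suc i}}"
    by (auto simp: path_E_def)
  then have "vdeg (path_E n) i \<le> card {{i - 1, i}, {i, Suc i}}"
    unfolding vdeg_def by (intro card_mono) auto
  also have "\<dots> \<le> 2"
    by (simp add: card_insert_if)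
  finally show ?thesis .
qed

lemma path_chem_graph: "chem_graph n (n - 1) (path_V n) (path_E n)"
proof -
  have "card (path_V n) = n"
    by (simp add: path_V_def)
  moreover have "vdeg (path_E n) v \<le> 3" for v
    using vdeg_path_E_le_2 [of n v] by simp
  ultimately show ?thesis
    using path_simple_graph path_connected card_path_E by (simp add: chem_graph_def)
qed

lemma bij_betw_insert_0:
  assumes "bij_betw g (A - {a}) {0..<k}" "a \<in> A"
  shows "bij_betw (\<lambda>x. if x = a then 0 else Suc (g x)) A {0..<Suc k}"
proof -
  let ?f = "\<lambda>x. if x = a then 0 else Suc (g x)"
  have "bij_betw (Suc \<circ> g) (A - {a}) (Suc ` {0..<k})"
    using assms(1) by (rule bij_betw_trans) simp
  then have "bij_betw ?f (A - {a}) (Suc ` {0..<k})"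
    by (rule bij_betw_cong [THEN iffD1, rotated]) simp
  then have "bij_betw ?f ((A - {a}) \<union> {a}) (Suc ` {0..<k} \<union> {?f a})"
    by (rule notIn_Un_bij_betw [rotated 2]) auto
  moreover have "(A - {a}) \<union> {a} = A" "Suc ` {0..<k} \<union> {?f a} = {0..<Suc k}"
    using assms(2) by (auto simp: atLeast0_lessThan_Suc_eq_insert_0)
  ultimately show ?thesis
    by simp
qed

lemma path_numbering_add_leaf:
  assumes leaf: "{e \<in> E. v \<in> e} = {{v, w}}" "w \<noteq> v" "w \<in> V"
    and g: "bij_betw g (V - {v}) {0..<k}" "g w = 0"
      "\<forall>x\<in>V - {v}. \<forall>y\<in>V - {v}. {x, y} \<in> E - {{v, w}} \<longleftrightarrow> {g x, g y} \<in> path_E k"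
    and "x \<in> V" "y \<in> V"
  defines "f \<equiv> \<lambda>x. if x = v then 0 else Suc (g x)"
  shows "{x, y} \<in> E \<longleftrightarrow> {f x, f y} \<in> path_E (Suc k)"
proof -
  have edge_at_v: "{v, z} \<in> E \<longleftrightarrow> {f v, f z} \<in> path_E (Suc k)" if "z \<in> V" for z
  proof (cases "z = v")
    case True
    have "{v} \<notin> {e \<in> E. v \<in> e}"
      using leaf(1,2) by (simp add: doubleton_eq_iff)
    then show ?thesis
      using True by (simp add: singleton_notin_path_E)
  next
    case False
    then have "z \<in> V - {v}"
      using that by simp
    then have "g z < k"
      using bij_betw_apply [OF g(1)] by simp
    have "{v, z} \<in> E \<longleftrightarrow> {v, z} \<in> {e \<in> E. v \<in> e}"
      by simp
    also have "\<dots> \<longleftrightarrow> z = w"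
      using leaf(1) False by (simp add: doubleton_eq_iff)
    also have "\<dots> \<longleftrightarrow> g z = 0"
      using inj_onD [OF bij_betw_imp_inj_on [OF g(1)], of z w] g(2) \<open>z \<in> V - {v}\<close> leaf(2,3)
      by auto
    also have "\<dots> \<longleftrightarrow> {f v, f z} \<in> path_E (Suc k)"
      using \<open>g z < k\<close> False by (auto simp: f_def doubleton_in_path_E)
    finally show ?thesis .
  qed
  show ?thesis
  proof (cases "x = v \<or> y = v")
    case True
    then consider "x = v" | "y = v"
      by blast
    then show ?thesis
    proof cases
      case 1
      then show ?thesis
        using edge_at_v [OF \<open>y \<in> V\<close>] by simp
    next
      case 2
      then show ?thesis
        using edge_at_v [OF \<open>x \<in> V\<close>] by (simp add: insert_commute)
    qed
  next
    case False
    then have "{x, y} \<in> E \<longleftrightarrow> {x, y} \<in> E - {{v, w}}"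
      by (auto simp: doubleton_eq_iff)
    also have "\<dots> \<longleftrightarrow> {g x, g y} \<in> path_E k"
      using g(3) \<open>x \<in> V\<close> \<open>y \<in> V\<close> False by simp
    also have "\<dots> \<longleftrightarrow> {f x, f y} \<in> path_E (Suc k)"
      using False by (simp add: f_def doubleton_in_path_E)
    finally show ?thesis .
  qed
qed

lemma tree_max_degree_2_path_numbering:
  assumes "is_tree V E" "\<forall>x\<in>V. vdeg E x \<le> 2" "v \<in> V" "vdeg E v \<le> 1"
  shows "\<exists>f. bij_betw f V {0..<card V} \<and> f v = 0 \<and>
           (\<forall>x\<in>V. \<forall>y\<in>V. {x, y} \<in> E \<longleftrightarrow> {f x, f y} \<in> path_E (card V))"
  using assms
proof (induction "card V" arbitrary: V E v)
  case 0
  then show ?case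
    by (simp add: is_tree_def)
next
  case (Suc k)
  have sg: "simple_graph V E" and conn: "graph_connected V E"
    using Suc.prems(1) by (auto simp: is_tree_def)
  show ?case
  proof (cases "k = 0")
    case True
    then have "V = {v}"
      using Suc.hyps Suc.prems(3) by (metis One_nat_def card_1_singleton_iff singletonD)
    then show ?thesis
      using True Suc.hyps no_edge_in_singleton [OF sg, of v]
      by (intro exI [of _ "\<lambda>_. 0"]) (auto simp: singleton_notin_path_E)
  next
    case False
    then have "vdeg E v = 1"
      using connected_vdeg_pos [OF sg conn Suc.prems(3)] Suc.hyps Suc.prems(4) by simp
    then obtain w where w: "w \<in> V" "w \<noteq> v" "{e \<in> E. v \<in> e} = {{v, w}}"
      by (rule leaf_incident_edge [OF sg])
    have tree': "is_tree (V - {v}) (E - {{v, w}})"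
      using Suc.prems(1) w(3,2) by (rule tree_remove_leaf)
    have "vdeg (E - {{v, w}}) x = (if x \<in> {v, w} then vdeg E x - 1 else vdeg E x)" for x
      using simple_graph_finite_edges [OF sg] w(3) by (intro vdeg_Diff_edge) auto
    then have "\<forall>x\<in>V - {v}. vdeg (E - {{v, w}}) x \<le> 2" "vdeg (E - {{v, w}}) w \<le> 1"
      using Suc.prems(2) w(1) by auto
    moreover have card': "k = card (V - {v})"
      using Suc.hyps(2) Suc.prems(3) sg by (simp add: simple_graph_finite_vertices)
    ultimately obtain g where g: "bij_betw g (V - {v}) {0..<k}" "g w = 0"
        "\<forall>x\<in>V - {v}. \<forall>y\<in>V - {v}. {x, y} \<in> E - {{v, w}} \<longleftrightarrow> {g x, g y} \<in> path_E k"
      using Suc.hyps(1) [OF card' tree'] w(1,2) unfolding card' by blast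
    show ?thesis
      using bij_betw_insert_0 [OF g(1) Suc.prems(3)] path_numbering_add_leaf [OF w(3,2,1) g]
      unfolding Suc.hyps(2) [symmetric] by auto
  qed
qed

definition edge_of_degrees :: "'a set set \<Rightarrow> nat \<Rightarrow> nat \<Rightarrow> 'a set \<Rightarrow> bool" where
  "edge_of_degrees E i j e \<longleftrightarrow> (\<exists>u v. e = {u, v} \<and> u \<noteq> v \<and> vdeg E u = i \<and> vdeg E v = j)"

abbreviation num_vertices_of_degree :: "'a set \<Rightarrow> 'a set set \<Rightarrow> nat \<Rightarrow> nat" where
  "num_vertices_of_degree V E k \<equiv> card {v \<in> V. vdeg E v = k}"

lemma m_edges_eq_sum: "finite E \<Longrightarrow> m_edges E i j = (\<Sum>e\<in>E. of_bool (edge_of_degrees E i j e))"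
  unfolding m_edges_def edge_of_degrees_def of_bool_def by (simp add: sum.inter_filter [symmetric])

lemma edge_of_degrees_doubleton:
  "u \<noteq> v \<Longrightarrow> edge_of_degrees E i j {u, v} \<longleftrightarrow>
     (vdeg E u = i \<and> vdeg E v = j) \<or> (vdeg E u = j \<and> vdeg E v = i)"
  unfolding edge_of_degrees_def by (auto simp: doubleton_eq_iff)

lemma m_edges_eq_0_if_no_vertex_of_degree:
  assumes "simple_graph V E" "\<forall>v\<in>V. vdeg E v \<noteq> j"
  shows "m_edges E i j = 0"
proof -
  have "\<not> edge_of_degrees E i j e" if "e \<in> E" for e
    using assms that by (auto elim!: simple_graph_edgeE simp: edge_of_degrees_doubleton)
  then show ?thesis
    using simple_graph_finite_edges [OF assms(1)] by (simp add: m_edges_def edge_of_degrees_def)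
qed

lemma no_edge_between_leaves:
  assumes sg: "simple_graph V E" and conn: "graph_connected V E" and "3 \<le> card V"
    and uv: "{u, v} \<in> E" and leaves: "vdeg E u = 1" "vdeg E v = 1"
  shows False
proof -
  have incident: "{e \<in> E. x \<in> e} = {{u, v}}" if "x \<in> {u, v}" for x
  proof -
    have "vdeg E x = 1"
      using that leaves by auto
    then obtain e where "{e \<in> E. x \<in> e} = {e}"
      by (auto simp: vdeg_def card_1_singleton_iff)
    moreover have "{u, v} \<in> {e \<in> E. x \<in> e}"
      using uv that by blast
    ultimately show ?thesis
      by simp
  qed
  have closed: "x \<in> {u, v}" if "(u, x) \<in> (adj_rel E)\<^sup>*" for x
    using that
  proof (induction rule: rtrancl_induct)
    case (step y z)
    then have "{y, z} \<in> {e \<in> E. y \<in> e}"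
      by simp
    then have "{y, z} = {u, v}"
      using incident [OF step.IH] by simp
    then show ?case
      by blast
  qed simp
  have "u \<in> V"
    using simple_graph_edge_subset [OF sg uv] by simp
  then have "V \<subseteq> {u, v}"
    using conn closed by (auto simp: graph_connected_def)
  then have "card V \<le> card {u, v}"
    by (simp add: card_mono)
  also have "\<dots> \<le> 2"
    by (simp add: card_insert_if)
  finally show False
    using \<open>3 \<le> card V\<close> by simp
qed

lemma chem_tree_vdeg_range:
  assumes "chem_graph n (n - 1) V E" "2 \<le> n" "v \<in> V"
  shows "vdeg E v \<in> {1, 2, 3}"
proof -
  have "1 \<le> vdeg E v"
    using assms connected_vdeg_pos [of V E v] by (simp add: chem_graph_def)
  moreover have "vdeg E v \<le> 3"
    using assms(1,3) by (simp add: chem_graph_def)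
  ultimately show ?thesis
    by auto
qed

lemma chem_tree_edge_profile:
  assumes "chem_graph n (n - 1) V E" "3 \<le> n" "e \<in> E"
  defines "\<delta> i j \<equiv> of_bool (edge_of_degrees E i j e) :: nat"
  shows "card {x \<in> e. vdeg E x = 1} = \<delta> 1 2 + \<delta> 1 3"
    and "card {x \<in> e. vdeg E x = 2} = \<delta> 1 2 + 2 * \<delta> 2 2 + \<delta> 2 3"
    and "card {x \<in> e. vdeg E x = 3} = \<delta> 1 3 + \<delta> 2 3 + 2 * \<delta> 3 3"
    and "\<delta> 1 2 + \<delta> 1 3 + \<delta> 2 2 + \<delta> 2 3 + \<delta> 3 3 = 1"
proof -
  have sg: "simple_graph V E" and conn: "graph_connected V E" and card_V: "card V = n"
    using assms(1) by (auto simp: chem_graph_def)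
  obtain u v where uv: "e = {u, v}" "u \<noteq> v" "u \<in> V" "v \<in> V"
    using sg assms(3) by (rule simple_graph_edgeE)
  have degs: "vdeg E u \<in> {1, 2, 3}" "vdeg E v \<in> {1, 2, 3}"
    using chem_tree_vdeg_range [OF assms(1)] assms(2) uv(3,4) by auto
  have not_leaves: "\<not> (vdeg E u = 1 \<and> vdeg E v = 1)"
    using no_edge_between_leaves [OF sg conn] card_V assms(2,3) uv(1) by auto
  have card_eq: "card {x \<in> e. vdeg E x = k} = of_bool (vdeg E u = k) + of_bool (vdeg E v = k)"
    for k
  proof -
    have "{x \<in> e. vdeg E x = k} =
        (if vdeg E u = k then {u} else {}) \<union> (if vdeg E v = k then {v} else {})"
      using uv(1) by auto
    then show ?thesis
      using uv(2) by simp
  qed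
  show "card {x \<in> e. vdeg E x = 1} = \<delta> 1 2 + \<delta> 1 3"
    and "card {x \<in> e. vdeg E x = 2} = \<delta> 1 2 + 2 * \<delta> 2 2 + \<delta> 2 3"
    and "card {x \<in> e. vdeg E x = 3} = \<delta> 1 3 + \<delta> 2 3 + 2 * \<delta> 3 3"
    and "\<delta> 1 2 + \<delta> 1 3 + \<delta> 2 2 + \<delta> 2 3 + \<delta> 3 3 = 1"
    using degs not_leaves
    unfolding card_eq \<delta>_def edge_of_degrees_doubleton [OF uv(2), folded uv(1)] by auto
qed

lemma chem_tree_degree_counts:
  assumes "chem_graph n (n - 1) V E" "3 \<le> n"
  defines "n\<^sub>k \<equiv> num_vertices_of_degree V E"
  shows "m_edges E 1 2 + m_edges E 1 3 = n\<^sub>k 1"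
    and "m_edges E 1 2 + 2 * m_edges E 2 2 + m_edges E 2 3 = 2 * n\<^sub>k 2"
    and "m_edges E 1 3 + m_edges E 2 3 + 2 * m_edges E 3 3 = 3 * n\<^sub>k 3"
    and "m_edges E 1 2 + m_edges E 1 3 + m_edges E 2 2 + m_edges E 2 3 + m_edges E 3 3 = n - 1"
    and "n\<^sub>k 1 + n\<^sub>k 2 + n\<^sub>k 3 = n"
proof -
  have sg: "simple_graph V E" and card_V: "card V = n" and card_E: "card E = n - 1"
    using assms(1) by (auto simp: chem_graph_def)
  have fin: "finite V" "finite E"
    using sg simple_graph_finite_vertices simple_graph_finite_edges by blast+
  note profile = chem_tree_edge_profile [OF assms(1,2)]
  have m_sum: "m_edges E i j = (\<Sum>e\<in>E. of_bool (edge_of_degrees E i j e))" for i j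
    using fin(2) by (rule m_edges_eq_sum)
  have degree_sum: "(\<Sum>e\<in>E. card {x \<in> e. vdeg E x = k}) = k * n\<^sub>k k" for k
    unfolding n\<^sub>k_def sum_card_incident_vertices [OF sg] by simp
  show "m_edges E 1 2 + m_edges E 1 3 = n\<^sub>k 1"
    using degree_sum [of 1] profile(1) by (simp add: m_sum sum.distrib [symmetric])
  show "m_edges E 1 2 + 2 * m_edges E 2 2 + m_edges E 2 3 = 2 * n\<^sub>k 2"
    using degree_sum [of 2] profile(2)
    by (simp add: m_sum sum.distrib [symmetric] sum_distrib_left)
  show "m_edges E 1 3 + m_edges E 2 3 + 2 * m_edges E 3 3 = 3 * n\<^sub>k 3"
    using degree_sum [of 3] profile(3)
    by (simp add: m_sum sum.distrib [symmetric] sum_distrib_left)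
  show "m_edges E 1 2 + m_edges E 1 3 + m_edges E 2 2 + m_edges E 2 3 + m_edges E 3 3 = n - 1"
    using profile(4) card_E by (simp add: m_sum sum.distrib [symmetric])
  have "V = {v \<in> V. vdeg E v = 1} \<union> {v \<in> V. vdeg E v = 2} \<union> {v \<in> V. vdeg E v = 3}"
    using chem_tree_vdeg_range [OF assms(1)] assms(2) by fastforce
  then have "n = card ({v \<in> V. vdeg E v = 1} \<union> {v \<in> V. vdeg E v = 2} \<union> {v \<in> V. vdeg E v = 3})"
    using card_V by simp
  also have "\<dots> = n\<^sub>k 1 + n\<^sub>k 2 + n\<^sub>k 3"
    unfolding n\<^sub>k_def using fin(1) by (subst card_Un_disjoint; auto simp: card_Un_disjoint)+
  finally show "n\<^sub>k 1 + n\<^sub>k 2 + n\<^sub>k 3 = n" ..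
qed

lemma tree_m_edges_33_less:
  assumes "is_tree V E" "\<exists>v\<in>V. vdeg E v = 3"
  shows "m_edges E 3 3 < num_vertices_of_degree V E 3"
proof -
  have sg: "simple_graph V E"
    using assms(1) by (simp add: is_tree_def)
  have "edge_of_degrees E 3 3 e \<longleftrightarrow> e \<subseteq> {v \<in> V. vdeg E v = 3}" if "e \<in> E" for e
    using sg that by (auto elim!: simple_graph_edgeE simp: edge_of_degrees_doubleton)
  then have "m_edges E 3 3 = card {e \<in> E. e \<subseteq> {v \<in> V. vdeg E v = 3}}"
    unfolding m_edges_def edge_of_degrees_def [symmetric] by (metis (mono_tags, lifting) Collect_cong)
  also have "\<dots> < num_vertices_of_degree V E 3"
    using assms by (intro tree_induced_edges_less) auto
  finally show ?thesis .
qed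

lemma deg_index_chem_tree:
  assumes "chem_graph n (n - 1) V E" "3 \<le> n"
  shows "deg_index c12 c13 c22 c23 c33 E = 2 * c12 + (real n - 3) * c22
    + (c12 - 4*c22 + 3*c23) * num_vertices_of_degree V E 3
    + ((c13 - 3*c22 + 2*c23) - (c12 - 4*c22 + 3*c23)) * m_edges E 1 3
    + (c22 - 2*c23 + c33) * m_edges E 3 3"
proof -
  note counts = chem_tree_degree_counts [OF assms, THEN arg_cong [where f = real]]
  have m12: "real (m_edges E 1 2) = real (num_vertices_of_degree V E 3) + 2 - real (m_edges E 1 3)"
    and m22: "real (m_edges E 2 2) = real n - 3 - 4 * real (num_vertices_of_degree V E 3)
      + real (m_edges E 1 3) + real (m_edges E 3 3)"
    and m23: "real (m_edges E 2 3) = 3 * real (num_vertices_of_degree V E 3) - real (m_edges E 1 3)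
      - 2 * real (m_edges E 3 3)"
    using counts assms(2) by (simp_all add: of_nat_diff)
  show ?thesis
    unfolding deg_index_def m12 m22 m23 by (simp add: algebra_simps)
qed

lemma tree_max_degree_2_iso_path:
  assumes "is_tree V E" "\<forall>x\<in>V. vdeg E x \<le> 2"
  shows "graph_iso V E (path_V (card V)) (path_E (card V))"
proof -
  have sg: "simple_graph V E" and card_E: "card E + 1 = card V"
    using assms(1) by (auto simp: is_tree_def)
  obtain v where v: "v \<in> V" "vdeg E v \<le> 1"
  proof (cases "2 \<le> card V")
    case True
    then obtain v where "v \<in> V" "vdeg E v = 1"
      by (rule tree_has_leaf [OF assms(1)])
    then show thesis
      using that by simp
  next
    case False
    then have "card E = 0"
      using card_E by linarith
    then have "E = {}"
      using simple_graph_finite_edges [OF sg] by simp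
    moreover have "V \<noteq> {}"
      using card_E by auto
    ultimately show thesis
      using that by (auto simp: vdeg_def)
  qed
  then show ?thesis
    using tree_max_degree_2_path_numbering [OF assms] unfolding graph_iso_def path_V_def by blast
qed

lemma deg_index_chem_tree_max_degree_2:
  assumes "chem_graph n (n - 1) V E" "3 \<le> n" "\<forall>v\<in>V. vdeg E v \<le> 2"
  shows "deg_index c12 c13 c22 c23 c33 E = 2 * c12 + (real n - 3) * c22"
proof -
  have sg: "simple_graph V E"
    using assms(1) by (simp add: chem_graph_def)
  have no_3: "\<forall>v\<in>V. vdeg E v \<noteq> 3"
    using assms(3) by fastforce
  then have "{v \<in> V. vdeg E v = 3} = {}"
    by blast
  then have "num_vertices_of_degree V E 3 = 0"
    by (simp only: card.empty)
  with m_edges_eq_0_if_no_vertex_of_degree [OF sg no_3] show ?thesis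
    using deg_index_chem_tree [OF assms(1,2)] by simp
qed

lemma deg_index_chem_tree_gt:
  assumes "chem_graph n (n - 1) V E" "3 \<le> n" "\<exists>v\<in>V. vdeg E v = 3"
    and "c13 - 3*c22 + 2*c23 > c12 - 4*c22 + 3*c23"
    and "c12 - 4*c22 + 3*c23 > - (c22 - 2*c23 + c33)"
    and "- (c22 - 2*c23 + c33) > 0"
  shows "deg_index c12 c13 c22 c23 c33 E > 2 * c12 + (real n - 3) * c22"
proof -
  define a b c where "a = c12 - 4*c22 + 3*c23" and "b = c13 - 3*c22 + 2*c23"
    and "c = c22 - 2*c23 + c33"
  define N3 M13 M33 where "N3 = real (num_vertices_of_degree V E 3)"
    and "M13 = real (m_edges E 1 3)" and "M33 = real (m_edges E 3 3)"
  have "m_edges E 3 3 < num_vertices_of_degree V E 3"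
    using assms(1-3) chem_graph_is_tree tree_m_edges_33_less by fastforce
  then have "M33 \<le> N3 - 1"
    unfolding M33_def N3_def by linarith
  then have "c * (N3 - 1) \<le> c * M33"
    using assms(6) by (intro mult_left_mono_neg) (simp_all add: c_def)
  moreover have "0 \<le> (b - a) * M13" "0 \<le> (a + c) * N3"
    using assms(4,5) by (simp_all add: a_def b_def c_def M13_def N3_def)
  ultimately have "a * N3 + (b - a) * M13 + c * M33 \<ge> (a + c) * N3 - c"
    by (simp add: algebra_simps)
  moreover have "- c > 0"
    using assms(6) by (simp add: c_def)
  ultimately have "0 < a * N3 + (b - a) * M13 + c * M33"
    using \<open>0 \<le> (a + c) * N3\<close> by linarith
  then show ?thesis
    using deg_index_chem_tree [OF assms(1,2)]
    unfolding a_def b_def c_def N3_def M13_def M33_def by simp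
qed

theorem corollary1:
  fixes n :: nat and c12 c13 c22 c23 c33 :: real
  assumes "n \<ge> 3"
    and "c13 - 3*c22 + 2*c23 > c12 - 4*c22 + 3*c23"
    and "c12 - 4*c22 + 3*c23 > - (c22 - 2*c23 + c33)"
    and "- (c22 - 2*c23 + c33) > 0"
  shows "chem_graph n (n - 1) (path_V n) (path_E n) \<and>
    (\<forall>(V :: 'a set) E. chem_graph n (n - 1) V E \<longrightarrow>
        deg_index c12 c13 c22 c23 c33 (path_E n) \<le> deg_index c12 c13 c22 c23 c33 E \<and>
        (deg_index c12 c13 c22 c23 c33 E = deg_index c12 c13 c22 c23 c33 (path_E n)
           \<longrightarrow> graph_iso V E (path_V n) (path_E n)))"
proof -
  have path: "chem_graph n (n - 1) (path_V n) (path_E n)"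
    by (rule path_chem_graph)
  have index_path: "deg_index c12 c13 c22 c23 c33 (path_E n) = 2 * c12 + (real n - 3) * c22"
    using deg_index_chem_tree_max_degree_2 [OF path assms(1)] vdeg_path_E_le_2 by blast
  have "deg_index c12 c13 c22 c23 c33 (path_E n) \<le> deg_index c12 c13 c22 c23 c33 E \<and>
      (deg_index c12 c13 c22 c23 c33 E = deg_index c12 c13 c22 c23 c33 (path_E n)
         \<longrightarrow> graph_iso V E (path_V n) (path_E n))"
    if chem: "chem_graph n (n - 1) V E" for V :: "'a set" and E
  proof (cases "\<forall>v\<in>V. vdeg E v \<le> 2")
    case True
    have tree: "is_tree V E"
      using chem assms(1) by (simp add: chem_graph_is_tree)
    have "card V = n"
      using chem by (simp add: chem_graph_def)
    then have "graph_iso V E (path_V n) (path_E n)"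
      using tree_max_degree_2_iso_path [OF tree True] by simp
    then show ?thesis
      using deg_index_chem_tree_max_degree_2 [OF chem assms(1) True] index_path by simp
  next
    case False
    then have "\<exists>v\<in>V. vdeg E v = 3"
      using chem by (fastforce simp: chem_graph_def)
    then show ?thesis
      using deg_index_chem_tree_gt [OF chem assms(1) _ assms(2-4)] index_path by simp
  qed
  with path show ?thesis
    by blast
qed

end
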